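(* Let $Y$ be a real random variable with $\mathbb E[Y]=0$ such that for some $\theta>0$, $\Pr[|Y|\ge\xi]\le 2e^{-\xi^2\theta^2/2}$ for all $\xi\ge0$. Then for every $a>0$, $$\Pr[Y\ge0]\ge\frac{\operatorname{Var}[Y]}{2a^2}-2e^{-a^2\theta^2/2}\left(1+\sqrt2+\frac{\sqrt{2\pi}}{a\theta}+\frac{1}{a^2\theta^2}\right).$$ *)

theory Defs
  imports "HOL-Probability.Probability"
begin

end

theory Submission
  imports Defs
begin

(* Since E Y = 0, integrating the pointwise inequality
     y^2 <= 2 a^2 [y >= 0] - a y + 2 y^2 [y^2 > a^2]
   gives Var Y <= 2 a^2 P(Y >= 0) + 2 E[Y^2; Y^2 > a^2]. By the layer-cake formula the
   sub-Gaussian tail bounds this truncated second moment by 2 e^(-a^2 theta^2/2) (a^2 + 2/theta^2),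
   which is the claim with 2/(a theta)^2 in place of sqrt 2 + sqrt(2 pi)/(a theta) + 1/(a theta)^2.
   Where that replacement fails we have a theta < 1, and then the untruncated bound
   Var Y <= 4/theta^2 already suffices. *)

lemma nn_integral_layer_cake:
  fixes X :: "'a \<Rightarrow> real"
  assumes "sigma_finite_measure M" and [measurable]: "X \<in> borel_measurable M"
    and nonneg: "\<And>x. x \<in> space M \<Longrightarrow> X x \<ge> 0"
  shows "(\<integral>\<^sup>+x. ennreal (X x) \<partial>M) =
     (\<integral>\<^sup>+t. emeasure M {x \<in> space M. t < X x} * indicator {0..} t \<partial>lborel)"
proof -
  interpret pair_sigma_finite M lborel
    using assms(1) by (simp add: pair_sigma_finite_def lborel.sigma_finite_measure_axioms)
  define f where "f x t = (if 0 \<le> t \<and> t < X x then 1 else 0 :: ennreal)" for x and t :: real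
  have "case_prod f \<in> borel_measurable (M \<Otimes>\<^sub>M lborel)"
    unfolding f_def by measurable
  have integral_t: "(\<integral>\<^sup>+t. f x t \<partial>lborel) = ennreal (X x)" if "x \<in> space M" for x
  proof -
    have "(\<integral>\<^sup>+t. f x t \<partial>lborel) = (\<integral>\<^sup>+t. indicator {0..<X x} t \<partial>lborel)"
      by (rule nn_integral_cong) (auto simp: f_def indicator_def)
    also have "\<dots> = ennreal (X x)" using nonneg[OF that] by simp
    finally show ?thesis .
  qed
  have integral_x: "(\<integral>\<^sup>+x. f x t \<partial>M) = emeasure M {x \<in> space M. t < X x} * indicator {0..} t" for t
  proof -
    have "(\<integral>\<^sup>+x. f x t \<partial>M) = (\<integral>\<^sup>+x. indicator {0..} t * indicator {x \<in> space M. t < X x} x \<partial>M)"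
      by (rule nn_integral_cong) (auto simp: f_def indicator_def)
    also have "\<dots> = indicator {0..} t * emeasure M {x \<in> space M. t < X x}"
      by (rule nn_integral_cmult_indicator) measurable
    finally show ?thesis by (simp add: mult.commute)
  qed
  have "(\<integral>\<^sup>+x. ennreal (X x) \<partial>M) = (\<integral>\<^sup>+x. (\<integral>\<^sup>+t. f x t \<partial>lborel) \<partial>M)"
    by (rule nn_integral_cong) (simp add: integral_t)
  also have "\<dots> = (\<integral>\<^sup>+t. (\<integral>\<^sup>+x. f x t \<partial>M) \<partial>lborel)"
    using Fubini'[OF \<open>case_prod f \<in> borel_measurable (M \<Otimes>\<^sub>M lborel)\<close>] by simp
  also have "\<dots> = (\<integral>\<^sup>+t. emeasure M {x \<in> space M. t < X x} * indicator {0..} t \<partial>lborel)"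
    by (simp add: integral_x)
  finally show ?thesis .
qed

lemma nn_integral_above_le_exp_tail:
  fixes X :: "'a \<Rightarrow> real" and A C c :: real
  assumes "finite_measure M" and [measurable]: "X \<in> borel_measurable M"
    and c: "c > 0" and A: "A \<ge> 0"
    and tail: "\<And>t. t \<ge> 0 \<Longrightarrow> measure M {x \<in> space M. X x \<ge> t} \<le> C * exp (- c * t)"
  shows "(\<integral>\<^sup>+x. ennreal (if X x > A then X x else 0) \<partial>M)
     \<le> ennreal (C * exp (- c * A) * (A + 1 / c))"
proof -
  interpret finite_measure M by fact
  define Z where "Z x = (if X x > A then X x else 0)" for x
  have [measurable]: "Z \<in> borel_measurable M" unfolding Z_def by measurable
  have "C \<ge> 0" using tail[of 0] measure_nonneg[of M] by (smt (verit) exp_zero mult_cancel_left1)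
  have Z_tail: "emeasure M {x \<in> space M. t < Z x} \<le> ennreal (C * exp (- c * max t A))"
    if "t \<ge> 0" for t
  proof -
    have "{x \<in> space M. t < Z x} \<subseteq> {x \<in> space M. X x \<ge> max t A}"
      using that by (auto simp: Z_def split: if_splits)
    then have "emeasure M {x \<in> space M. t < Z x} \<le> emeasure M {x \<in> space M. X x \<ge> max t A}"
      by (intro emeasure_mono) measurable
    also have "\<dots> \<le> ennreal (C * exp (- c * max t A))"
      using that A by (simp only: emeasure_eq_measure) (intro ennreal_leI tail, simp)
    finally show ?thesis .
  qed
  have "(\<integral>\<^sup>+x. ennreal (Z x) \<partial>M)
      = (\<integral>\<^sup>+t. emeasure M {x \<in> space M. t < Z x} * indicator {0..} t \<partial>lborel)"
    using A by (intro nn_integral_layer_cake) (auto simp: Z_def sigma_finite_measure)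
  also have "\<dots> \<le> (\<integral>\<^sup>+t. ennreal (C * exp (- c * max t A)) * indicator {0..} t \<partial>lborel)"
    using Z_tail by (intro nn_integral_mono) (auto simp: indicator_def)
  also have "\<dots> = (\<integral>\<^sup>+t. ennreal (C * exp (- c * A)) * indicator {0..<A} t \<partial>lborel)
      + (\<integral>\<^sup>+t. ennreal (C * exp (- c * t)) * indicator {A..} t \<partial>lborel)"
    using A by (subst nn_integral_add[symmetric]) (auto intro!: nn_integral_cong simp: indicator_def max_def)
  also have "(\<integral>\<^sup>+t. ennreal (C * exp (- c * A)) * indicator {0..<A} t \<partial>lborel)
      = ennreal (C * exp (- c * A) * A)"
    using A \<open>C \<ge> 0\<close> by (simp add: nn_integral_cmult_indicator ennreal_mult)
  also have "(\<integral>\<^sup>+t. ennreal (C * exp (- c * t)) * indicator {A..} t \<partial>lborel)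
      = ennreal (C * (exp (- c * A) / c))"
    using has_integral_mult_right[OF has_integral_exp_minus_to_infinity[OF c, of A], of C] \<open>C \<ge> 0\<close>
    by (intro nn_integral_has_integral_lebesgue') auto
  also have "ennreal (C * exp (- c * A) * A) + ennreal (C * (exp (- c * A) / c))
      = ennreal (C * exp (- c * A) * (A + 1 / c))"
    using A c \<open>C \<ge> 0\<close> by (simp add: ennreal_plus[symmetric] algebra_simps del: ennreal_plus)
  finally show ?thesis by (simp add: Z_def)
qed

lemma integrable_integral_le_of_nn_integral_le:
  fixes f :: "'a \<Rightarrow> real"
  assumes [measurable]: "f \<in> borel_measurable M" and nonneg: "\<And>x. x \<in> space M \<Longrightarrow> f x \<ge> 0"
    and le: "(\<integral>\<^sup>+x. ennreal (f x) \<partial>M) \<le> ennreal B" and "B \<ge> 0"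
  shows "integrable M f" and "integral\<^sup>L M f \<le> B"
proof -
  show "integrable M f"
    using le nonneg by (intro integrableI_nonneg) (auto simp: top.not_eq_extremum intro: le_less_trans)
  then have "ennreal (integral\<^sup>L M f) \<le> ennreal B"
    using le nonneg by (subst nn_integral_eq_integral[symmetric]) auto
  then show "integral\<^sup>L M f \<le> B"
    using \<open>B \<ge> 0\<close> by (simp add: ennreal_le_iff)
qed

lemma (in prob_space) subgaussian_truncated_second_moment:
  fixes Y :: "'a \<Rightarrow> real" and \<theta> A :: real
  assumes [measurable]: "Y \<in> borel_measurable M" and "\<theta> > 0" and "A \<ge> 0"
    and tail: "\<And>\<xi>. \<xi> \<ge> 0 \<Longrightarrow> prob {x \<in> space M. \<bar>Y x\<bar> \<ge> \<xi>} \<le> 2 * exp (- (\<xi>\<^sup>2 * \<theta>\<^sup>2 / 2))"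
  shows "integrable M (\<lambda>x. if (Y x)\<^sup>2 > A then (Y x)\<^sup>2 else 0)"
    and "expectation (\<lambda>x. if (Y x)\<^sup>2 > A then (Y x)\<^sup>2 else 0)
         \<le> 2 * exp (- (A * \<theta>\<^sup>2 / 2)) * (A + 2 / \<theta>\<^sup>2)"
proof -
  have square_tail: "prob {x \<in> space M. (Y x)\<^sup>2 \<ge> t} \<le> 2 * exp (- (\<theta>\<^sup>2 / 2) * t)"
    if "t \<ge> 0" for t
  proof -
    have "{x \<in> space M. (Y x)\<^sup>2 \<ge> t} = {x \<in> space M. \<bar>Y x\<bar> \<ge> sqrt t}"
      by (metis real_sqrt_abs real_sqrt_le_iff)
    then show ?thesis
      using tail[of "sqrt t"] that by (simp add: mult.commute)
  qed
  have "(\<integral>\<^sup>+x. ennreal (if (Y x)\<^sup>2 > A then (Y x)\<^sup>2 else 0) \<partial>M)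
      \<le> ennreal (2 * exp (- (A * \<theta>\<^sup>2 / 2)) * (A + 2 / \<theta>\<^sup>2))"
    using nn_integral_above_le_exp_tail[where X = "\<lambda>x. (Y x)\<^sup>2" and c = "\<theta>\<^sup>2 / 2"]
      square_tail \<open>\<theta> > 0\<close> \<open>A \<ge> 0\<close> finite_measure_axioms
    by (simp add: mult.commute)
  then show "integrable M (\<lambda>x. if (Y x)\<^sup>2 > A then (Y x)\<^sup>2 else 0)"
    and "expectation (\<lambda>x. if (Y x)\<^sup>2 > A then (Y x)\<^sup>2 else 0)
         \<le> 2 * exp (- (A * \<theta>\<^sup>2 / 2)) * (A + 2 / \<theta>\<^sup>2)"
    using \<open>A \<ge> 0\<close> by (auto intro!: integrable_integral_le_of_nn_integral_le)
qed

lemma square_le_sign_bound: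
  fixes y a :: real
  assumes "a > 0"
  shows "y\<^sup>2 \<le> 2 * a\<^sup>2 * (if y \<ge> 0 then 1 else 0) - a * y + 2 * (if y\<^sup>2 > a\<^sup>2 then y\<^sup>2 else 0)"
proof -
  have sq: "y\<^sup>2 = \<bar>y\<bar> * \<bar>y\<bar>" by (simp add: power2_eq_square)
  have ay: "a * y \<le> a * \<bar>y\<bar>" using assms by (simp add: mult_left_mono)
  show ?thesis
  proof (cases "y\<^sup>2 > a\<^sup>2")
    case True
    then have "a \<le> \<bar>y\<bar>" using assms by (metis abs_le_square_iff abs_of_pos linorder_not_le less_imp_le)
    then have "a * \<bar>y\<bar> \<le> y\<^sup>2" unfolding sq by (rule mult_right_mono) auto
    then have "a * y \<le> y\<^sup>2" using ay by linarith
    with True show ?thesis by (cases "y \<ge> 0"; simp; smt (verit) zero_le_power2)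
  next
    case False
    then have y: "\<bar>y\<bar> \<le> a" using assms by (metis abs_le_square_iff abs_of_pos linorder_not_le)
    then have "y\<^sup>2 \<le> a * \<bar>y\<bar>" unfolding sq by (rule mult_right_mono) auto
    moreover have "a * \<bar>y\<bar> \<le> a\<^sup>2" using y assms by (simp add: power2_eq_square)
    ultimately show ?thesis using False ay by (cases "y \<ge> 0") auto
  qed
qed

lemma inverse_square_le_exp_mult:
  fixes b :: real
  assumes "0 < b" "b < 1"
  shows "1 / b\<^sup>2 \<le> exp (- (b\<^sup>2 / 2)) * (2 + 2 / b + 1 / b\<^sup>2)"
proof -
  have "(1 - b\<^sup>2 / 2) * (2 * b\<^sup>2 + 2 * b + 1) = 1 + 2 * b + 3 / 2 * b\<^sup>2 - b ^ 3 - b ^ 4"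
    by (simp add: algebra_simps power2_eq_square power3_eq_cube power4_eq_xxxx)
  moreover have "b ^ 3 \<le> b\<^sup>2" "b ^ 4 \<le> b\<^sup>2"
    using assms by (simp_all add: power_decreasing)
  moreover have "b\<^sup>2 \<le> b"
    using assms power_decreasing[of 1 2 b] by simp
  ultimately have "1 \<le> (1 - b\<^sup>2 / 2) * (2 * b\<^sup>2 + 2 * b + 1)"
    using assms by linarith
  also have "\<dots> \<le> exp (- (b\<^sup>2 / 2)) * (2 * b\<^sup>2 + 2 * b + 1)"
    using exp_ge_add_one_self[of "- (b\<^sup>2 / 2)"] assms by (intro mult_right_mono) auto
  also have "2 * b\<^sup>2 + 2 * b + 1 = b\<^sup>2 * (2 + 2 / b + 1 / b\<^sup>2)"
    using assms by (simp add: field_simps power2_eq_square)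
  finally show ?thesis
    using assms by (simp add: pos_divide_le_eq mult_ac)
qed

lemma subgaussian_bound_arith:
  fixes a \<theta> p V :: real
  assumes a: "a > 0" and \<theta>: "\<theta> > 0" and "p \<ge> 0"
    and V_le: "V \<le> 4 / \<theta>\<^sup>2"
    and V_le_p: "V \<le> 2 * a\<^sup>2 * p + 4 * exp (- (a\<^sup>2 * \<theta>\<^sup>2 / 2)) * (a\<^sup>2 + 2 / \<theta>\<^sup>2)"
  shows "p \<ge> V / (2 * a\<^sup>2) - 2 * exp (- (a\<^sup>2 * \<theta>\<^sup>2 / 2)) *
           (1 + sqrt 2 + sqrt (2 * pi) / (a * \<theta>) + 1 / (a\<^sup>2 * \<theta>\<^sup>2))"
proof -
  define b where "b = a * \<theta>"
  define e where "e = exp (- (b\<^sup>2 / 2))"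
  define K where "K = 1 + sqrt 2 + sqrt (2 * pi) / b + 1 / b\<^sup>2"
  have b: "b > 0" using a \<theta> by (simp add: b_def)
  have ab: "a\<^sup>2 * \<theta>\<^sup>2 = b\<^sup>2" by (simp add: b_def power_mult_distrib)
  have "V / (2 * a\<^sup>2) \<le> p + 2 * e * K"
  proof (cases "1 / b\<^sup>2 \<le> sqrt 2 + sqrt (2 * pi) / b")
    case True
    have "V / (2 * a\<^sup>2) \<le> p + 2 * e * (1 + 2 / b\<^sup>2)"
      using V_le_p a \<theta> by (simp add: e_def ab field_simps b_def)
    also have "\<dots> \<le> p + 2 * e * K"
      using True by (simp add: e_def K_def)
    finally show ?thesis .
  next
    case False
    have "1 \<le> sqrt 2" "2 \<le> sqrt (2 * pi)"
      using pi_ge_two real_sqrt_le_mono[of 4 "2 * pi"] by auto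
    moreover have "0 \<le> sqrt (2 * pi) / b" using b by simp
    ultimately have "b < 1"
      using False b by (smt (verit) one_le_power divide_le_eq_1_pos zero_less_power)
    have "sqrt (2 * pi) / b \<ge> 2 / b"
      using \<open>2 \<le> sqrt (2 * pi)\<close> b by (simp add: divide_right_mono)
    then have "2 + 2 / b + 1 / b\<^sup>2 \<le> K"
      unfolding K_def using \<open>1 \<le> sqrt 2\<close> by linarith
    then have "1 / b\<^sup>2 \<le> e * K"
      using inverse_square_le_exp_mult[OF b \<open>b < 1\<close>] unfolding e_def
      by (smt (verit) exp_gt_zero mult_left_mono)
    moreover have "V / (2 * a\<^sup>2) \<le> 2 / b\<^sup>2"
      using V_le a \<theta> by (simp add: field_simps b_def)
    ultimately show ?thesis using \<open>p \<ge> 0\<close> by linarith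
  qed
  then show ?thesis by (simp add: e_def K_def b_def ab)
qed

lemma (in prob_space) second_moment_le_prob_nonneg:
  fixes Y :: "'a \<Rightarrow> real" and a :: real
  assumes Y: "integrable M Y" and Y2: "integrable M (\<lambda>x. (Y x)\<^sup>2)"
    and "expectation Y = 0" and "a > 0"
  shows "expectation (\<lambda>x. (Y x)\<^sup>2)
    \<le> 2 * a\<^sup>2 * prob {x \<in> space M. Y x \<ge> 0} + 2 * expectation (\<lambda>x. if (Y x)\<^sup>2 > a\<^sup>2 then (Y x)\<^sup>2 else 0)"
proof -
  define S where "S = {x \<in> space M. Y x \<ge> 0}"
  define T where "T x = (if (Y x)\<^sup>2 > a\<^sup>2 then (Y x)\<^sup>2 else 0)" for x
  have [measurable]: "Y \<in> borel_measurable M" using Y by measurable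
  have [measurable]: "S \<in> sets M" unfolding S_def by measurable
  have [measurable]: "T \<in> borel_measurable M" unfolding T_def by measurable
  have T: "integrable M T"
    using Y2 by (rule Bochner_Integration.integrable_bound) (auto simp: T_def measurable)
  have S: "integrable M (indicator S :: 'a \<Rightarrow> real)"
    by (simp add: emeasure_eq_measure)
  have "(Y x)\<^sup>2 \<le> 2 * a\<^sup>2 * indicator S x - a * Y x + 2 * T x" if "x \<in> space M" for x
  proof -
    have "indicator S x = (if Y x \<ge> 0 then 1 else 0 :: real)"
      using that by (simp add: S_def indicator_def)
    then show ?thesis
      unfolding T_def using square_le_sign_bound[OF \<open>a > 0\<close>] by presburger
  qed
  then have "expectation (\<lambda>x. (Y x)\<^sup>2) \<le> expectation (\<lambda>x. 2 * a\<^sup>2 * indicator S x - a * Y x + 2 * T x)"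
    using Y2 Y S T by (intro integral_mono) auto
  also have "\<dots> = 2 * a\<^sup>2 * prob S - a * expectation Y + 2 * expectation T"
    using Y S T by simp
  finally show ?thesis
    using \<open>expectation Y = 0\<close> by (simp add: S_def T_def[abs_def])
qed

theorem lemma6:
  fixes M :: "'a measure" and Y :: "'a \<Rightarrow> real" and \<theta> a :: real
  assumes "prob_space M"
    and "Y \<in> borel_measurable M"
    and "prob_space.expectation M Y = 0"
    and "\<theta> > 0"
    and "\<And>\<xi>. \<xi> \<ge> 0 \<Longrightarrow>
           measure M {x \<in> space M. \<bar>Y x\<bar> \<ge> \<xi>} \<le> 2 * exp (- (\<xi>\<^sup>2 * \<theta>\<^sup>2 / 2))"
    and "a > 0"
  shows "measure M {x \<in> space M. Y x \<ge> 0} \<ge>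
           prob_space.variance M Y / (2 * a\<^sup>2)
           - 2 * exp (- (a\<^sup>2 * \<theta>\<^sup>2 / 2)) *
             (1 + sqrt 2 + sqrt (2 * pi) / (a * \<theta>) + 1 / (a\<^sup>2 * \<theta>\<^sup>2))"
proof -
  interpret prob_space M by fact
  note truncated = subgaussian_truncated_second_moment[OF assms(2,4) _ assms(5)]
  have "(\<lambda>x. if (Y x)\<^sup>2 > 0 then (Y x)\<^sup>2 else 0) = (\<lambda>x. (Y x)\<^sup>2)"
    by auto
  then have "integrable M (\<lambda>x. (Y x)\<^sup>2)" and V_le: "expectation (\<lambda>x. (Y x)\<^sup>2) \<le> 4 / \<theta>\<^sup>2"
    using truncated[of 0] by simp_all
  moreover have "integrable M Y"
    using assms(2) \<open>integrable M (\<lambda>x. (Y x)\<^sup>2)\<close> by (rule square_integrable_imp_integrable)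
  ultimately have "expectation (\<lambda>x. (Y x)\<^sup>2)
      \<le> 2 * a\<^sup>2 * prob {x \<in> space M. Y x \<ge> 0} + 4 * exp (- (a\<^sup>2 * \<theta>\<^sup>2 / 2)) * (a\<^sup>2 + 2 / \<theta>\<^sup>2)"
    using second_moment_le_prob_nonneg[OF _ _ assms(3,6)] truncated(2)[of "a\<^sup>2"] by fastforce
  moreover have "variance Y = expectation (\<lambda>x. (Y x)\<^sup>2)"
    using assms(3) by simp
  ultimately show ?thesis
    using subgaussian_bound_arith[OF assms(6,4) measure_nonneg V_le] by simp
qed

end
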